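(* Let $\mathcal X$ be a finitely aligned left-cancellative small category, $\mathcal C$ a concordant subcategory of $\mathcal X$, and $\sigma:\mathcal X^2\to\mathbb T$ a $2$-cocycle (whose restriction to $\mathcal C^2$ is also denoted $\sigma$). Then there is a unique $*$-homomorphism $\Phi:\mathcal TC^*(\mathcal C,\sigma)\to\mathcal TC^*(\mathcal X,\sigma)$ with $\Phi(t^{\mathcal C}_c)=t^{\mathcal X}_c$ for all $c\in\mathcal C$. If moreover, for every $v\in\mathcal C^0$, every finite exhaustive subset of $v\mathcal C$ is also exhaustive in $v\mathcal X$, then $\Phi$ descends to a $*$-homomorphism $\overline\Phi:C^*(\mathcal C,\sigma)\to C^*(\mathcal X,\sigma)$ with $\overline\Phi(s^{\mathcal C}_c)=s^{\mathcal X}_c$ for all $c\in\mathcal C$.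
   Context: Categories are small, identified with morphism sets; $\mathcal C^0$ objects, $r,s$ range/source, $\mathcal C^2$ composable pairs, $c\mathcal C=\{cc'\}$, $F\mathcal C=\bigcup_{c\in F}c\mathcal C$. Left-cancellative: $ab=ac\Rightarrow b=c$; finitely aligned: $a\mathcal C\cap b\mathcal C=F\mathcal C$ for some finite $F$; independent: $a\notin a'\mathcal C$ for distinct $a,a'\in F$; for $v\in\mathcal C^0$, $F\subseteq v\mathcal C$ is exhaustive if $c\mathcal C\cap F\mathcal C\ne\emptyset$ for all $c\in v\mathcal C$. A subcategory $\mathcal C\subseteq\mathcal X$ is concordant if for all $c_1,c_2\in\mathcal C$ with $c_1\mathcal X\cap c_2\mathcal X\neq\emptyset$ there is a finite independent $F\subseteq\mathcal C$ with $c_1\mathcal C\cap c_2\mathcal C=F\mathcal C$ such that whenever $x_1,x_2\in\mathcal X$ satisfy $c_1x_1=c_2x_2$, there exist $a_1,a_2$ with $c_1a_1=c_2a_2\in F$ and $y\in\mathcal X$ with $x_1=a_1y$ and $x_2=a_2y$. A $2$-cocycle: $\sigma(c_2,c_3)\sigma(c_1,c_2c_3)=\sigma(c_1,c_2)\sigma(c_1c_2,c_3)$, $\sigma(r(c),c)=1=\sigma(c,s(c))$. A $\sigma$-twisted representation: partial isometries $S_c$ with (R1) $S_{c_1}S_{c_2}=\delta_{s(c_1),r(c_2)}\sigma(c_1,c_2)S_{c_1c_2}$, (R2) $S_c^*S_c=S_{s(c)}$, (R3) $S_{c_1}S_{c_1}^*S_{c_2}S_{c_2}^*=\bigvee_{c\in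 F}S_cS_c^*$ for finite independent $F$ with $c_1\mathcal C\cap c_2\mathcal C=F\mathcal C$ ($=0$ if empty; $\bigvee$ = supremum of commuting projections); covariant if (R4) $S_v=\bigvee_{c\in F}S_cS_c^*$ for every $v$ and finite exhaustive $F\subseteq v\mathcal C$. $\mathcal TC^*(\mathcal C,\sigma)$ and $C^*(\mathcal C,\sigma)$ are generated by universal, resp. universal covariant, $\sigma$-twisted representations $t^{\mathcal C}$, $s^{\mathcal C}$. *)

theory Defs
  imports Complex_Main
begin

class cstar_algebra = real_normed_algebra + complete_space +
  fixes cscale :: "complex \<Rightarrow> 'a \<Rightarrow> 'a"
    and cadj :: "'a \<Rightarrow> 'a"
  assumes cscale_add_right: "cscale a (x + y) = cscale a x + cscale a y"
    and cscale_add_left: "cscale (a + b) x = cscale a x + cscale b x"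
    and cscale_cscale: "cscale a (cscale b x) = cscale (a * b) x"
    and cscale_one: "cscale 1 x = x"
    and scaleR_cscale: "scaleR r x = cscale (complex_of_real r) x"
    and norm_cscale: "norm (cscale a x) = cmod a * norm x"
    and mult_cscale_left: "cscale a x * y = cscale a (x * y)"
    and mult_cscale_right: "x * cscale a y = cscale a (x * y)"
    and cadj_cadj: "cadj (cadj x) = x"
    and cadj_add: "cadj (x + y) = cadj x + cadj y"
    and cadj_cscale: "cadj (cscale a x) = cscale (cnj a) (cadj x)"
    and cadj_mult: "cadj (x * y) = cadj y * cadj x"
    and cstar_identity: "norm (cadj x * x) = norm x * norm x"

definition star_hom :: "('a::cstar_algebra \<Rightarrow> 'b::cstar_algebra) \<Rightarrow> bool" where
  "star_hom f \<longleftrightarrow>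
     (\<forall>x y. f (x + y) = f x + f y) \<and> (\<forall>a x. f (cscale a x) = cscale a (f x)) \<and>
     (\<forall>x y. f (x * y) = f x * f y) \<and> (\<forall>x. f (cadj x) = cadj (f x))"

definition cstar_subalg :: "'a::cstar_algebra set \<Rightarrow> bool" where
  "cstar_subalg B \<longleftrightarrow> closed B \<and> 0 \<in> B \<and>
     (\<forall>x\<in>B. \<forall>y\<in>B. x + y \<in> B \<and> x * y \<in> B) \<and>
     (\<forall>a. \<forall>x\<in>B. cscale a x \<in> B) \<and> (\<forall>x\<in>B. cadj x \<in> B)"

definition generates :: "'m set \<Rightarrow> ('m \<Rightarrow> 'a::cstar_algebra) \<Rightarrow> bool" where
  "generates M t \<longleftrightarrow> (\<forall>B. cstar_subalg B \<and> t ` M \<subseteq> B \<longrightarrow> B = UNIV)"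

definition is_proj :: "'a::cstar_algebra \<Rightarrow> bool" where
  "is_proj p \<longleftrightarrow> cadj p = p \<and> p * p = p"

definition proj_le :: "'a::cstar_algebra \<Rightarrow> 'a \<Rightarrow> bool" where
  "proj_le p q \<longleftrightarrow> p * q = p"

definition is_sup_proj :: "'a::cstar_algebra set \<Rightarrow> 'a \<Rightarrow> bool" where
  "is_sup_proj P x \<longleftrightarrow> is_proj x \<and> (\<forall>p\<in>P. proj_le p x) \<and>
     (\<forall>q. is_proj q \<and> (\<forall>p\<in>P. proj_le p q) \<longrightarrow> proj_le x q)"

text \<open>A category is a morphism set M with range r, source s and composition cmp
  (cmp a b = ab defined when s a = r b); objects are identity morphisms.\<close>
definition small_cat :: "'m set \<Rightarrow> ('m \<Rightarrow> 'm) \<Rightarrow> ('m \<Rightarrow> 'm) \<Rightarrow> ('m \<Rightarrow> 'm \<Rightarrow> 'm) \<Rightarrow> bool" where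
  "small_cat M r s cmp \<longleftrightarrow>
    (\<forall>c\<in>M. r c \<in> M \<and> s c \<in> M \<and> r (r c) = r c \<and> s (r c) = r c \<and> r (s c) = s c \<and>
           s (s c) = s c \<and> cmp (r c) c = c \<and> cmp c (s c) = c) \<and>
    (\<forall>a\<in>M. \<forall>b\<in>M. s a = r b \<longrightarrow> cmp a b \<in> M \<and> r (cmp a b) = r a \<and> s (cmp a b) = s b) \<and>
    (\<forall>a\<in>M. \<forall>b\<in>M. \<forall>c\<in>M. s a = r b \<and> s b = r c \<longrightarrow> cmp (cmp a b) c = cmp a (cmp b c))"

definition objs :: "'m set \<Rightarrow> ('m \<Rightarrow> 'm) \<Rightarrow> ('m \<Rightarrow> 'm) \<Rightarrow> 'm set" where
  "objs M r s = {v \<in> M. r v = v \<and> s v = v}"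

definition subcat :: "'m set \<Rightarrow> 'm set \<Rightarrow> ('m \<Rightarrow> 'm) \<Rightarrow> ('m \<Rightarrow> 'm) \<Rightarrow> ('m \<Rightarrow> 'm \<Rightarrow> 'm) \<Rightarrow> bool" where
  "subcat C X r s cmp \<longleftrightarrow> C \<subseteq> X \<and> (\<forall>c\<in>C. r c \<in> C \<and> s c \<in> C) \<and>
     (\<forall>a\<in>C. \<forall>b\<in>C. s a = r b \<longrightarrow> cmp a b \<in> C)"

text \<open>c M = {c c' : c' \<in> M, composable}; F M = union of c M over c in F.\<close>
definition rid :: "'m set \<Rightarrow> ('m \<Rightarrow> 'm) \<Rightarrow> ('m \<Rightarrow> 'm) \<Rightarrow> ('m \<Rightarrow> 'm \<Rightarrow> 'm) \<Rightarrow> 'm \<Rightarrow> 'm set" where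
  "rid M r s cmp c = {cmp c d | d. d \<in> M \<and> s c = r d}"

definition ridS :: "'m set \<Rightarrow> ('m \<Rightarrow> 'm) \<Rightarrow> ('m \<Rightarrow> 'm) \<Rightarrow> ('m \<Rightarrow> 'm \<Rightarrow> 'm) \<Rightarrow> 'm set \<Rightarrow> 'm set" where
  "ridS M r s cmp F = (\<Union>c\<in>F. rid M r s cmp c)"

definition left_cancellative :: "'m set \<Rightarrow> ('m \<Rightarrow> 'm) \<Rightarrow> ('m \<Rightarrow> 'm) \<Rightarrow> ('m \<Rightarrow> 'm \<Rightarrow> 'm) \<Rightarrow> bool" where
  "left_cancellative M r s cmp \<longleftrightarrow>
     (\<forall>a\<in>M. \<forall>b\<in>M. \<forall>c\<in>M. s a = r b \<and> s a = r c \<and> cmp a b = cmp a c \<longrightarrow> b = c)"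

definition finitely_aligned :: "'m set \<Rightarrow> ('m \<Rightarrow> 'm) \<Rightarrow> ('m \<Rightarrow> 'm) \<Rightarrow> ('m \<Rightarrow> 'm \<Rightarrow> 'm) \<Rightarrow> bool" where
  "finitely_aligned M r s cmp \<longleftrightarrow>
     (\<forall>a\<in>M. \<forall>b\<in>M. \<exists>F. finite F \<and> F \<subseteq> M \<and>
        rid M r s cmp a \<inter> rid M r s cmp b = ridS M r s cmp F)"

definition independent :: "'m set \<Rightarrow> ('m \<Rightarrow> 'm) \<Rightarrow> ('m \<Rightarrow> 'm) \<Rightarrow> ('m \<Rightarrow> 'm \<Rightarrow> 'm) \<Rightarrow> 'm set \<Rightarrow> bool" where
  "independent M r s cmp F \<longleftrightarrow> (\<forall>a\<in>F. \<forall>a'\<in>F. a \<noteq> a' \<longrightarrow> a \<notin> rid M r s cmp a')"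

definition exhaustive :: "'m set \<Rightarrow> ('m \<Rightarrow> 'm) \<Rightarrow> ('m \<Rightarrow> 'm) \<Rightarrow> ('m \<Rightarrow> 'm \<Rightarrow> 'm) \<Rightarrow> 'm \<Rightarrow> 'm set \<Rightarrow> bool" where
  "exhaustive M r s cmp v F \<longleftrightarrow> F \<subseteq> rid M r s cmp v \<and>
     (\<forall>c\<in>rid M r s cmp v. rid M r s cmp c \<inter> ridS M r s cmp F \<noteq> {})"

definition concordant :: "'m set \<Rightarrow> 'm set \<Rightarrow> ('m \<Rightarrow> 'm) \<Rightarrow> ('m \<Rightarrow> 'm) \<Rightarrow> ('m \<Rightarrow> 'm \<Rightarrow> 'm) \<Rightarrow> bool" where
  "concordant C X r s cmp \<longleftrightarrow>
    (\<forall>c1\<in>C. \<forall>c2\<in>C. rid X r s cmp c1 \<inter> rid X r s cmp c2 \<noteq> {} \<longrightarrow>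
      (\<exists>F. finite F \<and> F \<subseteq> C \<and> independent C r s cmp F \<and>
         rid C r s cmp c1 \<inter> rid C r s cmp c2 = ridS C r s cmp F \<and>
         (\<forall>x1\<in>X. \<forall>x2\<in>X. s c1 = r x1 \<and> s c2 = r x2 \<and> cmp c1 x1 = cmp c2 x2 \<longrightarrow>
            (\<exists>a1\<in>C. \<exists>a2\<in>C. \<exists>y\<in>X. s c1 = r a1 \<and> s c2 = r a2 \<and>
               cmp c1 a1 = cmp c2 a2 \<and> cmp c1 a1 \<in> F \<and>
               s a1 = r y \<and> s a2 = r y \<and> x1 = cmp a1 y \<and> x2 = cmp a2 y))))"

definition cocycle2 :: "'m set \<Rightarrow> ('m \<Rightarrow> 'm) \<Rightarrow> ('m \<Rightarrow> 'm) \<Rightarrow> ('m \<Rightarrow> 'm \<Rightarrow> 'm) \<Rightarrow> ('m \<Rightarrow> 'm \<Rightarrow> complex) \<Rightarrow> bool" where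
  "cocycle2 M r s cmp \<sigma> \<longleftrightarrow>
    (\<forall>a\<in>M. \<forall>b\<in>M. s a = r b \<longrightarrow> cmod (\<sigma> a b) = 1) \<and>
    (\<forall>c1\<in>M. \<forall>c2\<in>M. \<forall>c3\<in>M. s c1 = r c2 \<and> s c2 = r c3 \<longrightarrow>
        \<sigma> c2 c3 * \<sigma> c1 (cmp c2 c3) = \<sigma> c1 c2 * \<sigma> (cmp c1 c2) c3) \<and>
    (\<forall>c\<in>M. \<sigma> (r c) c = 1 \<and> \<sigma> c (s c) = 1)"

definition twisted_rep :: "'m set \<Rightarrow> ('m \<Rightarrow> 'm) \<Rightarrow> ('m \<Rightarrow> 'm) \<Rightarrow> ('m \<Rightarrow> 'm \<Rightarrow> 'm) \<Rightarrow>
    ('m \<Rightarrow> 'm \<Rightarrow> complex) \<Rightarrow> ('m \<Rightarrow> 'a::cstar_algebra) \<Rightarrow> bool" where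
  "twisted_rep M r s cmp \<sigma> S \<longleftrightarrow>
    (\<forall>c\<in>M. is_proj (cadj (S c) * S c)) \<and>
    (\<forall>c1\<in>M. \<forall>c2\<in>M. S c1 * S c2 =
        (if s c1 = r c2 then cscale (\<sigma> c1 c2) (S (cmp c1 c2)) else 0)) \<and>
    (\<forall>c\<in>M. cadj (S c) * S c = S (s c)) \<and>
    (\<forall>c1\<in>M. \<forall>c2\<in>M. \<forall>F. finite F \<and> F \<subseteq> M \<and> independent M r s cmp F \<and>
        rid M r s cmp c1 \<inter> rid M r s cmp c2 = ridS M r s cmp F \<longrightarrow>
        is_sup_proj {S c * cadj (S c) | c. c \<in> F}
          (S c1 * cadj (S c1) * S c2 * cadj (S c2)))"

definition covariant_rep :: "'m set \<Rightarrow> ('m \<Rightarrow> 'm) \<Rightarrow> ('m \<Rightarrow> 'm) \<Rightarrow> ('m \<Rightarrow> 'm \<Rightarrow> 'm) \<Rightarrow>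
    ('m \<Rightarrow> 'm \<Rightarrow> complex) \<Rightarrow> ('m \<Rightarrow> 'a::cstar_algebra) \<Rightarrow> bool" where
  "covariant_rep M r s cmp \<sigma> S \<longleftrightarrow> twisted_rep M r s cmp \<sigma> S \<and>
    (\<forall>v\<in>objs M r s. \<forall>F. finite F \<and> exhaustive M r s cmp v F \<longrightarrow>
        is_sup_proj {S c * cadj (S c) | c. c \<in> F} (S v))"

text \<open>Universal properties. Since HOL cannot quantify over types inside a formula, the
  universal property is stated relative to a target type given by the itself argument.\<close>
definition toeplitz_universal :: "'b::cstar_algebra itself \<Rightarrow> 'm set \<Rightarrow> ('m \<Rightarrow> 'm) \<Rightarrow> ('m \<Rightarrow> 'm) \<Rightarrow>
    ('m \<Rightarrow> 'm \<Rightarrow> 'm) \<Rightarrow> ('m \<Rightarrow> 'm \<Rightarrow> complex) \<Rightarrow> ('m \<Rightarrow> 'a::cstar_algebra) \<Rightarrow> bool" where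
  "toeplitz_universal _ M r s cmp \<sigma> t \<longleftrightarrow> twisted_rep M r s cmp \<sigma> t \<and> generates M t \<and>
    (\<forall>S :: 'm \<Rightarrow> 'b. twisted_rep M r s cmp \<sigma> S \<longrightarrow>
       (\<exists>!\<pi> :: 'a \<Rightarrow> 'b. star_hom \<pi> \<and> (\<forall>c\<in>M. \<pi> (t c) = S c)))"

definition covariant_universal :: "'b::cstar_algebra itself \<Rightarrow> 'm set \<Rightarrow> ('m \<Rightarrow> 'm) \<Rightarrow> ('m \<Rightarrow> 'm) \<Rightarrow>
    ('m \<Rightarrow> 'm \<Rightarrow> 'm) \<Rightarrow> ('m \<Rightarrow> 'm \<Rightarrow> complex) \<Rightarrow> ('m \<Rightarrow> 'a::cstar_algebra) \<Rightarrow> bool" where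
  "covariant_universal _ M r s cmp \<sigma> t \<longleftrightarrow> covariant_rep M r s cmp \<sigma> t \<and> generates M t \<and>
    (\<forall>S :: 'm \<Rightarrow> 'b. covariant_rep M r s cmp \<sigma> S \<longrightarrow>
       (\<exists>!\<pi> :: 'a \<Rightarrow> 'b. star_hom \<pi> \<and> (\<forall>c\<in>M. \<pi> (t c) = S c)))"

end

theory Submission
  imports Defs
begin

text \<open>Restricted to \<open>\<C>\<close>, a twisted representation of \<open>\<X>\<close> is one of \<open>\<C>\<close>: (R1) and (R2) are
  inherited, and for (R3) concordance gives \<open>c\<^sub>1\<X> \<inter> c\<^sub>2\<X> = F\<X>\<close> whenever \<open>c\<^sub>1\<C> \<inter> c\<^sub>2\<C> = F\<C>\<close>,
  so the range projections indexed by \<open>F\<close> and by an \<open>\<X>\<close>-independent subset of \<open>F\<close> have the same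
  supremum. Applied to the universal representation of \<open>\<X>\<close> this yields \<open>\<Phi>\<close>. Under the
  exhaustiveness hypothesis covariance is inherited as well, which yields the map between the
  Cuntz-Krieger algebras; it intertwines the quotient maps because both composites agree on the
  generators of \<open>\<T>C\<^sup>*(\<C>,\<sigma>)\<close>.\<close>

locale small_category =
  fixes X :: "'m set" and r s :: "'m \<Rightarrow> 'm" and cmp :: "'m \<Rightarrow> 'm \<Rightarrow> 'm"
  assumes small_cat: "small_cat X r s cmp"
begin

lemma source_closed: "c \<in> X \<Longrightarrow> s c \<in> X"
  using small_cat by (simp add: small_cat_def)

lemma range_source: "c \<in> X \<Longrightarrow> r (s c) = s c"
  using small_cat by (simp add: small_cat_def)

lemma comp_source: "c \<in> X \<Longrightarrow> cmp c (s c) = c"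
  using small_cat by (simp add: small_cat_def)

lemma comp_closed: "a \<in> X \<Longrightarrow> b \<in> X \<Longrightarrow> s a = r b \<Longrightarrow> cmp a b \<in> X"
  using small_cat by (simp add: small_cat_def)

lemma range_comp: "a \<in> X \<Longrightarrow> b \<in> X \<Longrightarrow> s a = r b \<Longrightarrow> r (cmp a b) = r a"
  using small_cat by (simp add: small_cat_def)

lemma source_comp: "a \<in> X \<Longrightarrow> b \<in> X \<Longrightarrow> s a = r b \<Longrightarrow> s (cmp a b) = s b"
  using small_cat by (simp add: small_cat_def)

lemma comp_assoc:
  "a \<in> X \<Longrightarrow> b \<in> X \<Longrightarrow> c \<in> X \<Longrightarrow> s a = r b \<Longrightarrow> s b = r c \<Longrightarrow> cmp (cmp a b) c = cmp a (cmp b c)"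
  using small_cat by (simp add: small_cat_def)

lemma mem_rid_self: "c \<in> X \<Longrightarrow> c \<in> rid X r s cmp c"
  using source_closed[of c] range_source[of c] comp_source[of c] unfolding rid_def by force

lemma rid_subset_rid:
  assumes a': "a' \<in> X" and a: "a \<in> rid X r s cmp a'"
  shows "rid X r s cmp a \<subseteq> rid X r s cmp a'"
proof
  fix x assume "x \<in> rid X r s cmp a"
  then obtain e where x: "x = cmp a e" "e \<in> X" "s a = r e" by (auto simp: rid_def)
  from a obtain d where d: "a = cmp a' d" "d \<in> X" "s a' = r d" by (auto simp: rid_def)
  have de: "s d = r e" using x d a' source_comp by metis
  have "x = cmp a' (cmp d e)" using comp_assoc[OF a' d(2) x(2) d(3) de] d x by simp
  moreover have "cmp d e \<in> X" "r (cmp d e) = r d"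
    using comp_closed[OF d(2) x(2) de] range_comp[OF d(2) x(2) de] by simp_all
  ultimately show "x \<in> rid X r s cmp a'" using d by (auto simp: rid_def)
qed

lemma exists_independent_subset_same_ridS:
  "finite G \<Longrightarrow> G \<subseteq> X \<Longrightarrow>
    \<exists>G'. G' \<subseteq> G \<and> independent X r s cmp G' \<and> ridS X r s cmp G' = ridS X r s cmp G"
proof (induction "card G" arbitrary: G rule: less_induct)
  case less
  show ?case
  proof (cases "independent X r s cmp G")
    case False
    then obtain a a' where aa: "a \<in> G" "a' \<in> G" "a \<noteq> a'" "a \<in> rid X r s cmp a'"
      by (auto simp: independent_def)
    have "ridS X r s cmp (G - {a}) = ridS X r s cmp G"
      using rid_subset_rid[OF _ aa(4)] aa less.prems unfolding ridS_def by blast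
    moreover have "card (G - {a}) < card G" using aa less.prems by (meson card_Diff1_less)
    ultimately obtain G' where "G' \<subseteq> G - {a}" "independent X r s cmp G'"
        "ridS X r s cmp G' = ridS X r s cmp (G - {a})"
      using less.hyps[of "G - {a}"] less.prems by blast
    then show ?thesis using \<open>ridS X r s cmp (G - {a}) = ridS X r s cmp G\<close> by blast
  qed (use order_refl in blast)
qed

end

lemma subcat_rid_subset: "subcat C X r s cmp \<Longrightarrow> rid C r s cmp c \<subseteq> rid X r s cmp c"
  by (auto simp: subcat_def rid_def)

lemma subcat_small_category:
  assumes "small_category X r s cmp" "subcat C X r s cmp"
  shows "small_category C r s cmp"
  using assms unfolding small_category_def small_cat_def subcat_def by (meson subsetD)

lemma (in small_category) concordant_rid_inter_eq:
  assumes sub: "subcat C X r s cmp" and conc: "concordant C X r s cmp"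
    and c1: "c1 \<in> C" and c2: "c2 \<in> C" and F: "F \<subseteq> C"
    and FC: "rid C r s cmp c1 \<inter> rid C r s cmp c2 = ridS C r s cmp F"
  shows "rid X r s cmp c1 \<inter> rid X r s cmp c2 = ridS X r s cmp F"
proof
  have CX: "C \<subseteq> X" using sub by (simp add: subcat_def)
  interpret C: small_category C r s cmp by (rule subcat_small_category[OF _ sub]) unfold_locales
  show "ridS X r s cmp F \<subseteq> rid X r s cmp c1 \<inter> rid X r s cmp c2"
  proof -
    have "a \<in> rid X r s cmp c1 \<inter> rid X r s cmp c2" if "a \<in> F" for a
      using that F FC C.mem_rid_self subcat_rid_subset[OF sub] unfolding ridS_def by blast
    then show ?thesis
      unfolding ridS_def using rid_subset_rid c1 c2 CX by blast
  qed
  show "rid X r s cmp c1 \<inter> rid X r s cmp c2 \<subseteq> ridS X r s cmp F"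
  proof
    fix g assume g: "g \<in> rid X r s cmp c1 \<inter> rid X r s cmp c2"
    then obtain x1 x2 where x: "x1 \<in> X" "x2 \<in> X" "s c1 = r x1" "s c2 = r x2"
      "g = cmp c1 x1" "cmp c1 x1 = cmp c2 x2" by (auto simp: rid_def)
    from conc c1 c2 g obtain F0 where F0: "F0 \<subseteq> C"
      "rid C r s cmp c1 \<inter> rid C r s cmp c2 = ridS C r s cmp F0" and
      factor: "\<forall>x1\<in>X. \<forall>x2\<in>X. s c1 = r x1 \<and> s c2 = r x2 \<and> cmp c1 x1 = cmp c2 x2 \<longrightarrow>
            (\<exists>a1\<in>C. \<exists>a2\<in>C. \<exists>y\<in>X. s c1 = r a1 \<and> s c2 = r a2 \<and>
               cmp c1 a1 = cmp c2 a2 \<and> cmp c1 a1 \<in> F0 \<and>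
               s a1 = r y \<and> s a2 = r y \<and> x1 = cmp a1 y \<and> x2 = cmp a2 y)"
      unfolding concordant_def by (metis (no_types, lifting) empty_iff)
    from factor x obtain a1 y where ay: "a1 \<in> C" "y \<in> X" "s c1 = r a1" "cmp c1 a1 \<in> F0"
      "s a1 = r y" "x1 = cmp a1 y" by blast
    define f where "f = cmp c1 a1"
    have fC: "f \<in> C" using ay F0 f_def by auto
    have "f \<in> ridS C r s cmp F" using F0 FC ay(4) C.mem_rid_self[OF fC] f_def unfolding ridS_def by auto
    then obtain a where a: "a \<in> F" "f \<in> rid X r s cmp a"
      using subcat_rid_subset[OF sub] unfolding ridS_def by blast
    have c1X: "c1 \<in> X" and a1X: "a1 \<in> X" using c1 ay(1) CX by auto
    have "g = cmp f y"
      unfolding f_def using comp_assoc[OF c1X a1X ay(2) ay(3) ay(5)] x(5) ay(6) by simp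
    moreover have "s f = r y" unfolding f_def using source_comp[OF c1X a1X ay(3)] ay(5) by simp
    ultimately have "g \<in> rid X r s cmp f" using ay(2) by (auto simp: rid_def)
    then show "g \<in> ridS X r s cmp F"
      using rid_subset_rid[of a f] a F CX unfolding ridS_def by blast
  qed
qed


lemma proj_le_trans: "proj_le p q \<Longrightarrow> proj_le q u \<Longrightarrow> proj_le p (u::'a::cstar_algebra)"
  unfolding proj_le_def by (metis mult.assoc)

lemma proj_le_of_adjoint: "cadj p = p \<Longrightarrow> cadj q = q \<Longrightarrow> q * p = p \<Longrightarrow> proj_le p (q::'a::cstar_algebra)"
  unfolding proj_le_def by (metis cadj_mult)

lemma cadj_mult_self_cadj: "cadj (x * cadj x) = x * cadj (x::'a::cstar_algebra)"
  by (simp add: cadj_mult cadj_cadj)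

lemma is_sup_proj_cofinal:
  assumes sup: "is_sup_proj Q p" and QQ': "Q \<subseteq> Q'" and dom: "\<forall>q'\<in>Q'. \<exists>q\<in>Q. proj_le q' q"
  shows "is_sup_proj Q' p"
  unfolding is_sup_proj_def
proof (intro conjI ballI allI impI)
  show "is_proj p" using sup by (simp add: is_sup_proj_def)
  show "proj_le q' p" if "q' \<in> Q'" for q'
    using that dom sup proj_le_trans unfolding is_sup_proj_def by blast
  show "proj_le p q" if "is_proj q \<and> (\<forall>q'\<in>Q'. proj_le q' q)" for q
    using that QQ' sup unfolding is_sup_proj_def by blast
qed

lemma (in small_category) twisted_rep_range_proj_le:
  fixes S :: "'m \<Rightarrow> 'a::cstar_algebra"
  assumes coc: "cocycle2 X r s cmp \<sigma>" and tw: "twisted_rep X r s cmp \<sigma> S"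
    and a: "a \<in> X" and g: "g \<in> rid X r s cmp a"
  shows "proj_le (S g * cadj (S g)) (S a * cadj (S a))"
proof -
  obtain z where z: "g = cmp a z" "z \<in> X" "s a = r z" using g by (auto simp: rid_def)
  have "S a * S z = cscale (\<sigma> a z) (S g)" using tw a z by (simp add: twisted_rep_def)
  moreover have "cnj (\<sigma> a z) * \<sigma> a z = 1"
    using coc a z by (simp add: cocycle2_def complex_norm_square[symmetric] mult.commute)
  ultimately have Sg: "S g = cscale (cnj (\<sigma> a z)) (S a * S z)"
    by (simp add: cscale_cscale cscale_one)
  have "S a * S (s a) = cscale (\<sigma> a (s a)) (S (cmp a (s a)))"
    using tw a source_closed range_source by (simp add: twisted_rep_def)
  also have "\<dots> = S a" using coc a comp_source by (simp add: cocycle2_def cscale_one)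
  finally have "S a * cadj (S a) * S a = S a"
    using tw a by (simp add: twisted_rep_def mult.assoc)
  then have "S a * cadj (S a) * S g = S g"
    unfolding Sg by (simp add: mult_cscale_right mult.assoc[symmetric])
  then have "S a * cadj (S a) * (S g * cadj (S g)) = S g * cadj (S g)"
    by (simp add: mult.assoc[symmetric])
  then show ?thesis by (intro proj_le_of_adjoint) (simp_all add: cadj_mult_self_cadj)
qed

lemma twisted_rep_supD:
  assumes "twisted_rep M r s cmp \<sigma> S" "c1 \<in> M" "c2 \<in> M" "finite F" "F \<subseteq> M"
    "independent M r s cmp F" "rid M r s cmp c1 \<inter> rid M r s cmp c2 = ridS M r s cmp F"
  shows "is_sup_proj {S c * cadj (S c) | c. c \<in> F} (S c1 * cadj (S c1) * S c2 * cadj (S c2))"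
  using assms by (simp add: twisted_rep_def)

lemma twisted_rep_restrict_concordant:
  fixes S :: "'m \<Rightarrow> 'a::cstar_algebra"
  assumes cat: "small_cat X r s cmp" and sub: "subcat C X r s cmp" and conc: "concordant C X r s cmp"
    and coc: "cocycle2 X r s cmp \<sigma>" and tw: "twisted_rep X r s cmp \<sigma> S"
  shows "twisted_rep C r s cmp \<sigma> S"
proof -
  interpret small_category X r s cmp using cat by unfold_locales
  have CX: "C \<subseteq> X" using sub by (simp add: subcat_def)
  have R3: "is_sup_proj {S c * cadj (S c) | c. c \<in> F} (S c1 * cadj (S c1) * S c2 * cadj (S c2))"
    if c: "c1 \<in> C" "c2 \<in> C" and F: "finite F" "F \<subseteq> C"
      and FC: "rid C r s cmp c1 \<inter> rid C r s cmp c2 = ridS C r s cmp F" for c1 c2 F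
  proof -
    have FX: "F \<subseteq> X" using F(2) CX by blast
    obtain G where G: "G \<subseteq> F" "independent X r s cmp G" "ridS X r s cmp G = ridS X r s cmp F"
      using exists_independent_subset_same_ridS[OF F(1) FX] by blast
    have "rid X r s cmp c1 \<inter> rid X r s cmp c2 = ridS X r s cmp G"
      using concordant_rid_inter_eq[OF sub conc c F(2) FC] G(3) by simp
    moreover have "finite G" "G \<subseteq> X" using G(1) F(1) FX finite_subset by auto
    ultimately have sup: "is_sup_proj {S c * cadj (S c) | c. c \<in> G} (S c1 * cadj (S c1) * S c2 * cadj (S c2))"
      using c CX G(2) by (intro twisted_rep_supD[OF tw]) auto
    have dom: "\<exists>g\<in>G. proj_le (S f * cadj (S f)) (S g * cadj (S g))" if f: "f \<in> F" for f
    proof -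
      have "f \<in> ridS X r s cmp F" using f FX mem_rid_self[of f] unfolding ridS_def by blast
      then have "f \<in> ridS X r s cmp G" using G(3) by simp
      then obtain g where "g \<in> G" "f \<in> rid X r s cmp g" unfolding ridS_def by blast
      with \<open>G \<subseteq> X\<close> show ?thesis by (blast intro: twisted_rep_range_proj_le[OF coc tw])
    qed
    show ?thesis
      using G(1) dom by (intro is_sup_proj_cofinal[OF sup]) blast+
  qed
  show ?thesis
    unfolding twisted_rep_def
  proof (intro conjI ballI allI impI)
    fix c assume "c \<in> C"
    then show "is_proj (cadj (S c) * S c)" and "cadj (S c) * S c = S (s c)"
      using tw CX unfolding twisted_rep_def by blast+
  next
    fix c1 c2 assume "c1 \<in> C" "c2 \<in> C"
    then show "S c1 * S c2 = (if s c1 = r c2 then cscale (\<sigma> c1 c2) (S (cmp c1 c2)) else 0)"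
      using tw CX unfolding twisted_rep_def by blast
  next
    fix c1 c2 F
    assume "c1 \<in> C" "c2 \<in> C" "finite F \<and> F \<subseteq> C \<and> independent C r s cmp F \<and>
      rid C r s cmp c1 \<inter> rid C r s cmp c2 = ridS C r s cmp F"
    then show "is_sup_proj {S c * cadj (S c) | c. c \<in> F} (S c1 * cadj (S c1) * S c2 * cadj (S c2))"
      using R3 by simp
  qed
qed

lemma covariant_rep_restrict_concordant:
  fixes S :: "'m \<Rightarrow> 'a::cstar_algebra"
  assumes cat: "small_cat X r s cmp" and sub: "subcat C X r s cmp" and conc: "concordant C X r s cmp"
    and coc: "cocycle2 X r s cmp \<sigma>" and cov: "covariant_rep X r s cmp \<sigma> S"
    and exh: "\<forall>v\<in>objs C r s. \<forall>F. finite F \<and> exhaustive C r s cmp v F \<longrightarrow> exhaustive X r s cmp v F"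
  shows "covariant_rep C r s cmp \<sigma> S"
proof -
  have "objs C r s \<subseteq> objs X r s" using sub by (auto simp: objs_def subcat_def)
  then show ?thesis
    using cov exh twisted_rep_restrict_concordant[OF cat sub conc coc]
    unfolding covariant_rep_def by blast
qed

lemma toeplitz_universalD:
  "toeplitz_universal TYPE('b::cstar_algebra) M r s cmp \<sigma> t \<Longrightarrow> twisted_rep M r s cmp \<sigma> S \<Longrightarrow>
    \<exists>!\<pi> :: 'a::cstar_algebra \<Rightarrow> 'b. star_hom \<pi> \<and> (\<forall>c\<in>M. \<pi> (t c) = S c)"
  by (simp add: toeplitz_universal_def)

lemma covariant_universalD:
  "covariant_universal TYPE('b::cstar_algebra) M r s cmp \<sigma> t \<Longrightarrow> covariant_rep M r s cmp \<sigma> S \<Longrightarrow>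
    \<exists>!\<pi> :: 'a::cstar_algebra \<Rightarrow> 'b. star_hom \<pi> \<and> (\<forall>c\<in>M. \<pi> (t c) = S c)"
  by (simp add: covariant_universal_def)

lemma star_hom_comp: "star_hom f \<Longrightarrow> star_hom g \<Longrightarrow> star_hom (f \<circ> g)"
  by (simp add: star_hom_def)

theorem proposition3p14:
  fixes X C :: "'m set" and r s :: "'m \<Rightarrow> 'm" and cmp :: "'m \<Rightarrow> 'm \<Rightarrow> 'm"
    and \<sigma> :: "'m \<Rightarrow> 'm \<Rightarrow> complex"
    and tC :: "'m \<Rightarrow> 'a::cstar_algebra" and tX :: "'m \<Rightarrow> 'b::cstar_algebra"
    and sC :: "'m \<Rightarrow> 'c::cstar_algebra" and sX :: "'m \<Rightarrow> 'd::cstar_algebra"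
  assumes catX: "small_cat X r s cmp"
    and lcX: "left_cancellative X r s cmp"
    and faX: "finitely_aligned X r s cmp"
    and sub: "subcat C X r s cmp"
    and conc: "concordant C X r s cmp"
    and coc: "cocycle2 X r s cmp \<sigma>"
    and tC_univ_b: "toeplitz_universal TYPE('b) C r s cmp \<sigma> tC"
    and tC_univ_c: "toeplitz_universal TYPE('c) C r s cmp \<sigma> tC"
    and tC_univ_d: "toeplitz_universal TYPE('d) C r s cmp \<sigma> tC"
    and tX_univ: "toeplitz_universal TYPE('d) X r s cmp \<sigma> tX"
    and sC_univ: "covariant_universal TYPE('d) C r s cmp \<sigma> sC"
    and sX_univ: "covariant_universal TYPE('d) X r s cmp \<sigma> sX"
  shows "(\<exists>!\<Phi> :: 'a \<Rightarrow> 'b. star_hom \<Phi> \<and> (\<forall>c\<in>C. \<Phi> (tC c) = tX c)) \<and>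
    ((\<forall>v\<in>objs C r s. \<forall>F. finite F \<and> exhaustive C r s cmp v F \<longrightarrow> exhaustive X r s cmp v F) \<longrightarrow>
      (\<forall>(\<Phi> :: 'a \<Rightarrow> 'b) (qC :: 'a \<Rightarrow> 'c) (qX :: 'b \<Rightarrow> 'd).
         star_hom \<Phi> \<and> (\<forall>c\<in>C. \<Phi> (tC c) = tX c) \<and>
         star_hom qC \<and> (\<forall>c\<in>C. qC (tC c) = sC c) \<and>
         star_hom qX \<and> (\<forall>c\<in>X. qX (tX c) = sX c) \<longrightarrow>
         (\<exists>\<Phi>b :: 'c \<Rightarrow> 'd. star_hom \<Phi>b \<and> (\<forall>c\<in>C. \<Phi>b (sC c) = sX c) \<and>
            (\<forall>a. \<Phi>b (qC a) = qX (\<Phi> a)))))"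
proof (intro conjI impI allI)
  have "twisted_rep X r s cmp \<sigma> tX" using tX_univ by (simp add: toeplitz_universal_def)
  then show "\<exists>!\<Phi> :: 'a \<Rightarrow> 'b. star_hom \<Phi> \<and> (\<forall>c\<in>C. \<Phi> (tC c) = tX c)"
    by (intro toeplitz_universalD[OF tC_univ_b] twisted_rep_restrict_concordant[OF catX sub conc coc])
next
  fix \<Phi> :: "'a \<Rightarrow> 'b" and qC :: "'a \<Rightarrow> 'c" and qX :: "'b \<Rightarrow> 'd"
  assume exh: "\<forall>v\<in>objs C r s. \<forall>F. finite F \<and> exhaustive C r s cmp v F \<longrightarrow> exhaustive X r s cmp v F"
    and H: "star_hom \<Phi> \<and> (\<forall>c\<in>C. \<Phi> (tC c) = tX c) \<and> star_hom qC \<and> (\<forall>c\<in>C. qC (tC c) = sC c) \<and>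
      star_hom qX \<and> (\<forall>c\<in>X. qX (tX c) = sX c)"
  have "covariant_rep X r s cmp \<sigma> sX" using sX_univ by (simp add: covariant_universal_def)
  then have covC: "covariant_rep C r s cmp \<sigma> sX"
    by (rule covariant_rep_restrict_concordant[OF catX sub conc coc _ exh])
  then obtain \<Phi>b :: "'c \<Rightarrow> 'd" where \<Phi>b: "star_hom \<Phi>b" "\<forall>c\<in>C. \<Phi>b (sC c) = sX c"
    using covariant_universalD[OF sC_univ] by blast
  have "\<exists>!\<pi> :: 'a \<Rightarrow> 'd. star_hom \<pi> \<and> (\<forall>c\<in>C. \<pi> (tC c) = sX c)"
    using covC by (intro toeplitz_universalD[OF tC_univ_d]) (simp add: covariant_rep_def)
  moreover have "star_hom (\<Phi>b \<circ> qC) \<and> (\<forall>c\<in>C. (\<Phi>b \<circ> qC) (tC c) = sX c)"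
    and "star_hom (qX \<circ> \<Phi>) \<and> (\<forall>c\<in>C. (qX \<circ> \<Phi>) (tC c) = sX c)"
    using \<Phi>b H star_hom_comp sub by (auto simp: subcat_def)
  ultimately have "\<Phi>b \<circ> qC = qX \<circ> \<Phi>" by blast
  then show "\<exists>\<Phi>b :: 'c \<Rightarrow> 'd. star_hom \<Phi>b \<and> (\<forall>c\<in>C. \<Phi>b (sC c) = sX c) \<and> (\<forall>a. \<Phi>b (qC a) = qX (\<Phi> a))"
    using \<Phi>b by (metis comp_apply)
qed

end
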